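(* Let $X$ be a Banach space and let $\Lambda\subset B_{X^*}$ be weak$^*$ compact with $\overline{\mathrm{co}}^{w^*}\Lambda=B_{X^*}$. If the dual norm is Fréchet differentiable at every $x^*\in\Lambda\cap S_{X^*}$, then $X^*$ is Fréchet smooth.
   Context: $B_{X^*}$ and $S_{X^*}$ are the closed unit ball and unit sphere of $X^*$; $\overline{\mathrm{co}}^{w^*}$ denotes the weak$^*$ closed convex hull. $X^*$ is Fréchet smooth if the dual norm is Fréchet differentiable at every nonzero point of $X^*$. *)

theory Defs
  imports "HOL-Analysis.Analysis"
begin

(* The dual space X* of a real Banach space 'a is modelled by the type of bounded
   linear functionals 'a =>L real with the operator norm. *)

definition weak_star_topology :: "('a::real_normed_vector \<Rightarrow>\<^sub>L real) topology" where
  "weak_star_topology =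
     pullback_topology UNIV blinfun_apply (product_topology (\<lambda>_. euclideanreal) UNIV)"

definition weak_star_closed_convex_hull ::
  "('a::real_normed_vector \<Rightarrow>\<^sub>L real) set \<Rightarrow> ('a \<Rightarrow>\<^sub>L real) set" where
  "weak_star_closed_convex_hull S =
     \<Inter>{C. convex C \<and> closedin weak_star_topology C \<and> S \<subseteq> C}"

end

theory Submission
  imports Defs
begin

text \<open>
  By Smulian's criterion, the dual norm is Frechet differentiable at \<open>g \<noteq> 0\<close> exactly when
  the slices \<open>{x \<in> B\<^sub>X. g x \<ge> \<parallel>g\<parallel> - \<alpha>}\<close> of the unit ball of \<open>X\<close> have diameters tending
  to \<open>0\<close>. Suppose this fails for some \<open>g\<close> of norm one: there are pairs \<open>x\<^sub>n, y\<^sub>n\<close> at distance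
  \<open>> \<eta>\<close> in slices of width \<open>\<delta>\<^sub>n\<close> with \<open>\<Sum> \<delta>\<^sub>n / c\<^sub>n < 1\<close>, and their midpoints \<open>z\<^sub>n\<close>.
  If every \<open>f \<in> \<Lambda>\<close> missed one of the slices \<open>f z\<^sub>k \<ge> 1 - c\<^sub>k\<close>, \<open>k \<le> m\<close>, then the
  weak* closed half-space \<open>\<Sum>\<^sub>k (1 - h z\<^sub>k) / c\<^sub>k \<ge> 1\<close> would contain \<open>\<Lambda>\<close> but not \<open>g\<close>, which
  lies in its weak* closed convex hull. By weak* compactness some \<open>f \<in> \<Lambda>\<close> lies in all
  these slices; it has norm one, and \<open>x\<^sub>n, y\<^sub>n\<close> lie in slices of \<open>f\<close> of width \<open>2 c\<^sub>n \<rightarrow> 0\<close>,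
  contradicting the differentiability of the norm at \<open>f\<close>.
\<close>

lemma blinfun_le_norm_on_unit_ball:
  fixes F :: "'a::real_normed_vector \<Rightarrow>\<^sub>L real"
  assumes "norm x \<le> 1"
  shows "F x \<le> norm F"
proof -
  have "F x \<le> norm F * norm x"
    using norm_blinfun[of F x] by simp
  also have "\<dots> \<le> norm F"
    using assms by (simp add: mult_left_le)
  finally show ?thesis .
qed

lemma norm_blinfun_le_of_unit_ball_bound:
  fixes F :: "'a::real_normed_vector \<Rightarrow>\<^sub>L real"
  assumes "\<And>x. norm x \<le> 1 \<Longrightarrow> F x \<le> B"
  shows "norm F \<le> B"
proof (rule norm_blinfun_bound)
  show "0 \<le> B"
    using assms[of 0] by simp
  fix x :: 'a
  show "norm (F x) \<le> B * norm x"
  proof (cases "x = 0")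
    case False
    define u where "u = x /\<^sub>R norm x"
    have "norm u = 1" "norm (- u) = 1"
      using False by (simp_all add: u_def)
    then have "\<bar>F u\<bar> \<le> B"
      using assms[of u] assms[of "- u"] by (simp add: blinfun.minus_right)
    moreover have "F x = norm x * F u"
      using False by (simp add: u_def blinfun.scaleR_right)
    ultimately have "norm (F x) \<le> norm x * B"
      by (simp add: abs_mult mult_left_mono)
    then show ?thesis
      by (simp add: mult.commute)
  qed simp
qed

lemma exists_almost_norming_point:
  fixes F :: "'a::real_normed_vector \<Rightarrow>\<^sub>L real"
  assumes "e > 0"
  shows "\<exists>x. norm x \<le> 1 \<and> norm F - e < F x"
proof (rule ccontr)
  assume "\<not> ?thesis"
  then have "norm F \<le> norm F - e"
    by (intro norm_blinfun_le_of_unit_ball_bound) (auto simp: not_less)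
  with assms show False
    by simp
qed

lemma topspace_weak_star_topology: "topspace weak_star_topology = UNIV"
  by (simp add: weak_star_topology_def topspace_pullback_topology)

lemma continuous_map_weak_star_eval:
  "continuous_map weak_star_topology euclideanreal (\<lambda>h. blinfun_apply h w)"
proof -
  have "continuous_map weak_star_topology euclideanreal ((\<lambda>p. p w) \<circ> blinfun_apply)"
    unfolding weak_star_topology_def
    by (intro continuous_map_pullback continuous_map_product_projection) simp
  then show ?thesis
    by (simp add: o_def)
qed

lemma closedin_weak_star_le:
  "closedin weak_star_topology {h :: 'a::real_normed_vector \<Rightarrow>\<^sub>L real. h w \<le> s}"
  using closedin_continuous_map_preimage[OF continuous_map_weak_star_eval, of "{..s}"]
  by (simp add: topspace_weak_star_topology)

lemma closedin_weak_star_ge: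
  "closedin weak_star_topology {h :: 'a::real_normed_vector \<Rightarrow>\<^sub>L real. s \<le> h w}"
  using closedin_continuous_map_preimage[OF continuous_map_weak_star_eval, of "{s..}"]
  by (simp add: topspace_weak_star_topology)

lemma weak_star_closed_convex_hull_le:
  assumes "g \<in> weak_star_closed_convex_hull \<Lambda>" and "\<And>f. f \<in> \<Lambda> \<Longrightarrow> f w \<le> s"
  shows "g w \<le> s"
proof -
  have "convex {h :: 'a \<Rightarrow>\<^sub>L real. h w \<le> s}"
    using convex_linear_vimage[OF bounded_linear.linear[OF blinfun.bounded_linear_left]
        convex_real_interval(2), of w s]
    by (simp add: vimage_def)
  with closedin_weak_star_le assms show ?thesis
    unfolding weak_star_closed_convex_hull_def by blast
qed

lemma compactin_weak_star_halfspaces_fip: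
  fixes \<Lambda> :: "('a::real_normed_vector \<Rightarrow>\<^sub>L real) set"
    and b :: "nat \<Rightarrow> real" and z :: "nat \<Rightarrow> 'a"
  assumes "compactin weak_star_topology \<Lambda>"
    and "\<And>m. \<exists>f\<in>\<Lambda>. \<forall>k\<le>m. b k \<le> f (z k)"
  shows "\<exists>f\<in>\<Lambda>. \<forall>k. b k \<le> f (z k)"
proof -
  define A where "A k = {h :: 'a \<Rightarrow>\<^sub>L real. b k \<le> h (z k)}" for k
  have "\<Lambda> \<inter> \<Inter>F \<noteq> {}" if F: "finite F" "F \<subseteq> range A" for F
  proof -
    obtain K where K: "finite K" "F = A ` K"
      using finite_subset_image[OF F] by blast
    obtain m where m: "K \<subseteq> {..<m}"
      using finite_nat_bounded[OF K(1)] by blast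
    obtain f where f: "f \<in> \<Lambda>" "\<forall>k\<le>m. b k \<le> f (z k)"
      using assms(2) by blast
    then have "f \<in> \<Inter>F"
      using K(2) m by (auto simp: A_def)
    with f(1) show ?thesis
      by blast
  qed
  moreover have "\<forall>C\<in>range A. closedin weak_star_topology C"
    by (simp add: A_def closedin_weak_star_ge)
  ultimately have "\<Lambda> \<inter> \<Inter>(range A) \<noteq> {}"
    using assms(1) unfolding compactin_fip by blast
  then show ?thesis
    by (auto simp: A_def)
qed

definition slice :: "('a::real_normed_vector \<Rightarrow>\<^sub>L real) \<Rightarrow> real \<Rightarrow> 'a set" where
  "slice g \<alpha> = {x. norm x \<le> 1 \<and> norm g - \<alpha> \<le> g x}"

text \<open>Here \<open>k\<close> ranges over \<open>X*\<close>, so the condition says \<open>\<parallel>x - y\<parallel> \<le> \<eta>\<close> without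
  appealing to the Hahn--Banach theorem.\<close>

definition has_small_slices :: "('a::real_normed_vector \<Rightarrow>\<^sub>L real) \<Rightarrow> bool" where
  "has_small_slices g \<longleftrightarrow>
     (\<forall>\<eta>>0. \<exists>\<alpha>>0. \<forall>x\<in>slice g \<alpha>. \<forall>y\<in>slice g \<alpha>. \<forall>k.
        \<bar>blinfun_apply k x - blinfun_apply k y\<bar> \<le> \<eta> * norm k)"

lemma slice_mono: "\<alpha> \<le> \<beta> \<Longrightarrow> slice g \<alpha> \<subseteq> slice g \<beta>"
  by (auto simp: slice_def)

lemma slice_scaleR:
  assumes "c > 0"
  shows "slice (c *\<^sub>R g) (c * \<alpha>) = slice g \<alpha>"
proof -
  have "norm (c *\<^sub>R g) - c * \<alpha> \<le> (c *\<^sub>R g) x \<longleftrightarrow> c * (norm g - \<alpha>) \<le> c * g x" for x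
    using assms by (simp add: blinfun.scaleR_left right_diff_distrib)
  with assms show ?thesis
    by (simp add: slice_def)
qed

lemma has_small_slices_scaleR:
  fixes g :: "'a::real_normed_vector \<Rightarrow>\<^sub>L real"
  assumes "c > 0" and "has_small_slices g"
  shows "has_small_slices (c *\<^sub>R g)"
  unfolding has_small_slices_def
proof (intro allI impI)
  fix \<eta> :: real
  assume "\<eta> > 0"
  with assms(2) obtain \<alpha> where "\<alpha> > 0"
    and "\<forall>x\<in>slice g \<alpha>. \<forall>y\<in>slice g \<alpha>. \<forall>k. \<bar>blinfun_apply k x - blinfun_apply k y\<bar> \<le> \<eta> * norm k"
    unfolding has_small_slices_def by blast
  with assms(1) show "\<exists>\<alpha>>0. \<forall>x\<in>slice (c *\<^sub>R g) \<alpha>. \<forall>y\<in>slice (c *\<^sub>R g) \<alpha>.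
      \<forall>k. \<bar>blinfun_apply k x - blinfun_apply k y\<bar> \<le> \<eta> * norm k"
    by (intro exI[of _ "c * \<alpha>"]) (simp add: slice_scaleR)
qed

lemma convex_slice: "convex (slice g \<alpha>)"
proof -
  have "slice g \<alpha> = cball 0 1 \<inter> blinfun_apply g -` {norm g - \<alpha>..}"
    by (auto simp: slice_def)
  then show ?thesis
    by (metis convex_Int convex_cball convex_linear_vimage convex_real_interval(1)
        blinfun.bounded_linear_right bounded_linear.linear)
qed

lemma slice_of_midpoint:
  assumes "norm x \<le> 1" and "norm y \<le> 1" and "(1 / 2) *\<^sub>R (x + y) \<in> slice f \<alpha>"
  shows "x \<in> slice f (2 * \<alpha>)"
proof -
  have "f y \<le> norm f"
    using assms(2) by (rule blinfun_le_norm_on_unit_ball)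
  moreover have "norm f - \<alpha> \<le> (f x + f y) / 2"
    using assms(3) by (simp add: slice_def blinfun.scaleR_right blinfun.add_right)
  ultimately show ?thesis
    using assms(1) by (simp add: slice_def)
qed

lemma has_small_slices_if_norm_differentiable:
  fixes f :: "'a::real_normed_vector \<Rightarrow>\<^sub>L real"
  assumes "norm differentiable (at f)"
  shows "has_small_slices f"
  unfolding has_small_slices_def
proof (intro allI impI)
  fix \<eta> :: real
  assume "\<eta> > 0"
  obtain D where D: "(norm has_derivative D) (at f)"
    using assms by (auto simp: differentiable_def)
  then have "linear D"
    by (simp add: has_derivative_linear)
  obtain r where "r > 0" and r: "\<And>y. norm (y - f) < r \<Longrightarrow>
      \<bar>norm y - norm f - D (y - f)\<bar> \<le> \<eta> / 4 * norm (y - f)"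
    using D \<open>\<eta> > 0\<close> unfolding has_derivative_at_alt
    by (metis divide_pos_pos real_norm_def zero_less_numeral)
  define t where "t = r / 2"
  have "t > 0" "t < r"
    using \<open>r > 0\<close> by (auto simp: t_def)
  define \<beta> where "\<beta> = \<eta> * t / 4"
  have one_sided: "k x - k y \<le> \<eta> * norm k"
    if x: "x \<in> slice f \<beta>" and y: "y \<in> slice f \<beta>" for x y and k :: "'a \<Rightarrow>\<^sub>L real"
  proof (cases "k = 0")
    case False
    \<comment> \<open>compare the first-order expansions of the norm at \<open>f + h\<close> and \<open>f - h\<close>\<close>
    define h where "h = (t / norm k) *\<^sub>R k"
    have "norm h = t"
      using False \<open>t > 0\<close> by (simp add: h_def)
    with r[of "f + h"] r[of "f - h"] \<open>t < r\<close> have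
      "\<bar>norm (f + h) - norm f - D h\<bar> \<le> \<beta>" "\<bar>norm (f - h) - norm f + D h\<bar> \<le> \<beta>"
      by (simp_all add: \<beta>_def linear_neg[OF \<open>linear D\<close>])
    moreover have "(f + h) x \<le> norm (f + h)" "(f - h) y \<le> norm (f - h)"
      using x y by (simp_all add: slice_def blinfun_le_norm_on_unit_ball)
    ultimately have "h x - h y \<le> 4 * \<beta>"
      using x y by (simp add: slice_def blinfun.add_left blinfun.diff_left) arith
    then have "t / norm k * (k x - k y) \<le> t / norm k * (\<eta> * norm k)"
      using False \<open>t > 0\<close>
      by (simp add: h_def \<beta>_def blinfun.scaleR_left right_diff_distrib mult.commute)
    then show ?thesis
      by (rule mult_left_le_imp_le) (use False \<open>t > 0\<close> in simp)
  qed simp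
  show "\<exists>\<alpha>>0. \<forall>x\<in>slice f \<alpha>. \<forall>y\<in>slice f \<alpha>. \<forall>k.
      \<bar>blinfun_apply k x - blinfun_apply k y\<bar> \<le> \<eta> * norm k"
    using \<open>\<eta> > 0\<close> \<open>t > 0\<close> one_sided
    by (intro exI[of _ \<beta>]) (auto simp: \<beta>_def abs_le_iff)
qed

lemma norm_has_derivative_if_slices_approximate:
  fixes g :: "'a::real_normed_vector \<Rightarrow>\<^sub>L real"
  assumes "linear D"
    and subgradient: "\<And>h. norm g + D h \<le> norm (g + h)"
    and approx: "\<And>e. e > 0 \<Longrightarrow> \<exists>\<alpha>>0. \<forall>x\<in>slice g \<alpha>. \<forall>h. \<bar>blinfun_apply h x - D h\<bar> \<le> e * norm h"
  shows "(norm has_derivative D) (at g)"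
proof -
  have D_bound: "\<bar>D h\<bar> \<le> norm h" for h
    using subgradient[of h] subgradient[of "- h"] norm_triangle_ineq[of g h]
      norm_triangle_ineq[of g "- h"] linear_neg[OF assms(1), of h]
    by auto
  have "bounded_linear D"
    using assms(1) D_bound
    by (intro bounded_linear_intro[where K = 1]) (auto simp: linear_add linear_scale)
  moreover have "\<exists>d>0. \<forall>y. norm (y - g) < d \<longrightarrow> \<bar>norm y - norm g - D (y - g)\<bar> \<le> e * norm (y - g)"
    if "e > 0" for e
  proof -
    obtain \<alpha> where "\<alpha> > 0" and \<alpha>: "\<forall>x\<in>slice g \<alpha>. \<forall>h. \<bar>blinfun_apply h x - D h\<bar> \<le> e * norm h"
      using approx[OF \<open>e > 0\<close>] by blast
    have "\<bar>norm y - norm g - D (y - g)\<bar> \<le> e * norm (y - g)" if "norm (y - g) < \<alpha> / 2" for y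
    proof -
      define h where "h = y - g"
      then have "y = g + h" "norm h < \<alpha> / 2"
        using that by simp_all
      have "norm (g + h) \<le> norm g + D h + e * norm h"
      proof (rule norm_blinfun_le_of_unit_ball_bound)
        fix x :: 'a
        assume x: "norm x \<le> 1"
        have "g x \<le> norm g" "h x \<le> norm h"
          using x by (simp_all add: blinfun_le_norm_on_unit_ball)
        moreover have "0 \<le> e * norm h"
          using \<open>e > 0\<close> by simp
        moreover have "h x \<le> D h + e * norm h" if "x \<in> slice g \<alpha>"
        proof -
          have "\<bar>h x - D h\<bar> \<le> e * norm h"
            using \<alpha> that by blast
          then show ?thesis
            by linarith
        qed
        ultimately show "(g + h) x \<le> norm g + D h + e * norm h"
          using x D_bound[of h] \<open>norm h < \<alpha> / 2\<close>
          by (cases "x \<in> slice g \<alpha>") (auto simp: slice_def blinfun.add_left)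
      qed
      with subgradient[of h] show ?thesis
        unfolding h_def[symmetric] by (simp add: \<open>y = g + h\<close> abs_le_iff)
    qed
    then show ?thesis
      using \<open>\<alpha> > 0\<close> by (intro exI[of _ "\<alpha> / 2"]) auto
  qed
  ultimately show ?thesis
    by (simp add: has_derivative_at_alt)
qed

lemma eventually_in_slice:
  fixes xs :: "nat \<Rightarrow> 'a::real_normed_vector"
  assumes "\<And>n. xs n \<in> slice g (inverse (real (Suc n)))" and "\<alpha> > 0"
  shows "eventually (\<lambda>n. xs n \<in> slice g \<alpha>) sequentially"
proof -
  obtain M where M: "inverse (real (Suc M)) < \<alpha>"
    using reals_Archimedean assms(2) by blast
  have "xs n \<in> slice g \<alpha>" if "M \<le> n" for n
  proof -
    from that have "inverse (real (Suc n)) \<le> \<alpha>"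
      using M by (smt (verit) le_imp_inverse_le of_nat_0_less_iff of_nat_mono Suc_le_mono zero_less_Suc)
    then show ?thesis
      using assms(1) slice_mono by blast
  qed
  then show ?thesis
    by (rule eventually_sequentiallyI)
qed

lemma convergent_along_small_slices:
  fixes g h :: "'a::real_normed_vector \<Rightarrow>\<^sub>L real"
  assumes "has_small_slices g" and "\<And>n. xs n \<in> slice g (inverse (real (Suc n)))"
  shows "convergent (\<lambda>n. h (xs n))"
proof -
  have "Cauchy (\<lambda>n. h (xs n))"
  proof (rule metric_CauchyI)
    fix e :: real
    assume "e > 0"
    define \<eta> where "\<eta> = e / (norm h + 1)"
    have "\<eta> > 0" "\<eta> * norm h < e"
      using \<open>e > 0\<close> by (auto simp: \<eta>_def field_simps add_pos_nonneg)
    obtain \<alpha> where "\<alpha> > 0" and \<alpha>: "\<forall>x\<in>slice g \<alpha>. \<forall>y\<in>slice g \<alpha>. \<forall>k.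
        \<bar>blinfun_apply k x - blinfun_apply k y\<bar> \<le> \<eta> * norm k"
      using assms(1) \<open>\<eta> > 0\<close> unfolding has_small_slices_def by blast
    obtain M where M: "\<And>n. M \<le> n \<Longrightarrow> xs n \<in> slice g \<alpha>"
      using eventually_in_slice[OF assms(2) \<open>\<alpha> > 0\<close>] by (auto simp: eventually_sequentially)
    have "dist (h (xs m)) (h (xs n)) < e" if "M \<le> m" "M \<le> n" for m n
    proof -
      have "\<bar>h (xs m) - h (xs n)\<bar> \<le> \<eta> * norm h"
        using \<alpha> M that by blast
      with \<open>\<eta> * norm h < e\<close> show ?thesis
        by (simp add: dist_real_def)
    qed
    then show "\<exists>M. \<forall>m\<ge>M. \<forall>n\<ge>M. dist (h (xs m)) (h (xs n)) < e"
      by blast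
  qed
  then show ?thesis
    by (simp add: Cauchy_convergent_iff)
qed

lemma norm_differentiable_if_has_small_slices:
  fixes g :: "'a::real_normed_vector \<Rightarrow>\<^sub>L real"
  assumes small: "has_small_slices g"
  shows "norm differentiable (at g)"
proof -
  have "\<exists>x. x \<in> slice g (inverse (real (Suc n)))" for n
  proof -
    obtain x where "norm x \<le> 1" "norm g - inverse (real (Suc n)) < g x"
      using exists_almost_norming_point[of "inverse (real (Suc n))" g] by auto
    then show ?thesis
      by (auto simp: slice_def)
  qed
  then obtain xs where xs: "\<And>n. xs n \<in> slice g (inverse (real (Suc n)))"
    by metis
  \<comment> \<open>the derivative is the weak* limit in \<open>X**\<close> of the almost norming sequence\<close>
  define D where "D h = lim (\<lambda>n. h (xs n))" for h :: "'a \<Rightarrow>\<^sub>L real"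
  have D: "(\<lambda>n. h (xs n)) \<longlonglongrightarrow> D h" for h :: "'a \<Rightarrow>\<^sub>L real"
    using convergent_along_small_slices[OF small xs] by (simp add: D_def convergent_LIMSEQ_iff)
  have "linear D"
  proof (rule linearI)
    show "D (a + b) = D a + D b" for a b :: "'a \<Rightarrow>\<^sub>L real"
      using tendsto_add[OF D[of a] D[of b]] D[of "a + b"]
      by (simp add: blinfun.add_left LIMSEQ_unique)
    show "D (c *\<^sub>R a) = c *\<^sub>R D a" for c and a :: "'a \<Rightarrow>\<^sub>L real"
      using tendsto_mult[OF tendsto_const[of c] D[of a]] D[of "c *\<^sub>R a"]
      by (simp add: blinfun.scaleR_left LIMSEQ_unique)
  qed
  moreover have "norm g + D h \<le> norm (g + h)" for h :: "'a \<Rightarrow>\<^sub>L real"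
  proof (rule tendsto_upperbound)
    show "(\<lambda>n. norm g - inverse (real (Suc n)) + h (xs n)) \<longlonglongrightarrow> norm g + D h"
      using tendsto_add[OF tendsto_diff[OF tendsto_const LIMSEQ_inverse_real_of_nat] D[of h]]
      by simp
    show "\<forall>\<^sub>F n in sequentially. norm g - inverse (real (Suc n)) + h (xs n) \<le> norm (g + h)"
    proof (intro always_eventually allI)
      fix n
      have "(g + h) (xs n) \<le> norm (g + h)"
        using xs[of n] by (simp add: slice_def blinfun_le_norm_on_unit_ball)
      then show "norm g - inverse (real (Suc n)) + h (xs n) \<le> norm (g + h)"
        using xs[of n] by (simp add: slice_def blinfun.add_left)
    qed
  qed simp
  moreover have "\<exists>\<alpha>>0. \<forall>x\<in>slice g \<alpha>. \<forall>h. \<bar>blinfun_apply h x - D h\<bar> \<le> e * norm h"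
    if "e > 0" for e
  proof -
    obtain \<alpha> where "\<alpha> > 0" and \<alpha>: "\<forall>x\<in>slice g \<alpha>. \<forall>y\<in>slice g \<alpha>. \<forall>k.
        \<bar>blinfun_apply k x - blinfun_apply k y\<bar> \<le> e * norm k"
      using small \<open>e > 0\<close> unfolding has_small_slices_def by blast
    have "\<bar>h x - D h\<bar> \<le> e * norm h" if "x \<in> slice g \<alpha>" for x and h :: "'a \<Rightarrow>\<^sub>L real"
    proof (rule tendsto_upperbound)
      show "(\<lambda>n. \<bar>h x - h (xs n)\<bar>) \<longlonglongrightarrow> \<bar>h x - D h\<bar>"
        by (intro tendsto_intros D)
      show "\<forall>\<^sub>F n in sequentially. \<bar>h x - h (xs n)\<bar> \<le> e * norm h"
        using eventually_in_slice[OF xs \<open>\<alpha> > 0\<close>] by eventually_elim (use \<alpha> that in blast)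
    qed simp
    with \<open>\<alpha> > 0\<close> show ?thesis
      by blast
  qed
  ultimately have "(norm has_derivative D) (at g)"
    by (rule norm_has_derivative_if_slices_approximate)
  then show ?thesis
    by (auto simp: differentiable_def)
qed

lemma exists_generator_in_slices:
  fixes \<Lambda> :: "('a::real_normed_vector \<Rightarrow>\<^sub>L real) set" and z :: "nat \<Rightarrow> 'a" and c :: "nat \<Rightarrow> real"
  assumes "g \<in> weak_star_closed_convex_hull \<Lambda>"
    and "\<And>f k. f \<in> \<Lambda> \<Longrightarrow> f (z k) \<le> 1"
    and "\<And>k. c k > 0"
    and "(\<Sum>k\<le>m. (1 - g (z k)) / c k) < 1"
  shows "\<exists>f\<in>\<Lambda>. \<forall>k\<le>m. 1 - c k \<le> f (z k)"
proof (rule ccontr)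
  assume none: "\<not> ?thesis"
  define w where "w = (\<Sum>k\<le>m. (1 / c k) *\<^sub>R z k)"
  define S where "S = (\<Sum>k\<le>m. 1 / c k)"
  have w: "S - h w = (\<Sum>k\<le>m. (1 - h (z k)) / c k)" for h :: "'a \<Rightarrow>\<^sub>L real"
    by (simp add: S_def w_def blinfun.sum_right blinfun.scaleR_right sum_subtractf[symmetric]
        diff_divide_distrib)
  have "f w \<le> S - 1" if f: "f \<in> \<Lambda>" for f
  proof -
    obtain k0 where "k0 \<le> m" "f (z k0) < 1 - c k0"
      using none f by (meson not_le)
    then have "1 < (1 - f (z k0)) / c k0"
      using assms(3)[of k0] by (simp add: field_simps)
    also have "\<dots> \<le> (\<Sum>k\<le>m. (1 - f (z k)) / c k)"
      by (rule member_le_sum)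
        (use \<open>k0 \<le> m\<close> assms(2)[OF f] assms(3) in \<open>auto intro!: divide_nonneg_pos\<close>)
    finally show ?thesis
      using w[of f] by simp
  qed
  then have "g w \<le> S - 1"
    by (rule weak_star_closed_convex_hull_le[OF assms(1)])
  with w[of g] assms(4) show False
    by simp
qed

lemma exists_unit_generator_in_slices:
  fixes \<Lambda> :: "('a::real_normed_vector \<Rightarrow>\<^sub>L real) set" and z :: "nat \<Rightarrow> 'a"
  assumes \<Lambda>_ball: "\<Lambda> \<subseteq> cball 0 1"
    and compact: "compactin weak_star_topology \<Lambda>"
    and "g \<in> weak_star_closed_convex_hull \<Lambda>" and "norm g = 1"
    and z: "\<And>n. z n \<in> slice g ((1 / 2) ^ n * (1 / 2) ^ (n + 2))"
  shows "\<exists>f\<in>\<Lambda>. norm f = 1 \<and> (\<forall>n. z n \<in> slice f ((1 / 2) ^ n))"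
proof -
  define c :: "nat \<Rightarrow> real" where "c n = (1 / 2) ^ n" for n
  have c_pos: "c n > 0" for n
    by (simp add: c_def)
  have z_ball: "norm (z n) \<le> 1" for n
    using z by (simp add: slice_def)
  have "\<exists>f\<in>\<Lambda>. \<forall>k\<le>m. 1 - c k \<le> f (z k)" for m
  proof (rule exists_generator_in_slices)
    show "f (z k) \<le> 1" if "f \<in> \<Lambda>" for f k
    proof -
      have "norm f \<le> 1"
        using \<Lambda>_ball that by auto
      with blinfun_le_norm_on_unit_ball[OF z_ball, of f k] show ?thesis
        by linarith
    qed
    have "(\<Sum>k\<le>m. (1 - g (z k)) / c k) \<le> (\<Sum>k\<le>m. c (k + 2))"
    proof (rule sum_mono)
      fix k
      have "1 - g (z k) \<le> c k * c (k + 2)"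
        using z[of k] \<open>norm g = 1\<close> by (simp add: slice_def c_def)
      then show "(1 - g (z k)) / c k \<le> c (k + 2)"
        using c_pos[of k] by (simp add: pos_divide_le_eq mult.commute)
    qed
    also have "\<dots> = 1 / 2 - c (m + 2)"
      by (induction m) (simp_all add: c_def)
    finally show "(\<Sum>k\<le>m. (1 - g (z k)) / c k) < 1"
      using c_pos[of "m + 2"] by simp
  qed (use assms(3) c_pos in auto)
  then obtain f where "f \<in> \<Lambda>" and f: "\<And>k. 1 - c k \<le> f (z k)"
    using compactin_weak_star_halfspaces_fip[OF compact, of "\<lambda>k. 1 - c k" z] by blast
  have "norm f = 1"
  proof -
    have "(\<lambda>k. 1 - c k) \<longlonglongrightarrow> 1 - 0"
      unfolding c_def by (intro tendsto_intros LIMSEQ_power_zero) simp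
    moreover have "1 - c k \<le> norm f" for k
      using f[of k] blinfun_le_norm_on_unit_ball[OF z_ball] by (rule order_trans)
    ultimately have "1 \<le> norm f"
      using LIMSEQ_le_const2 by fastforce
    with \<Lambda>_ball \<open>f \<in> \<Lambda>\<close> show ?thesis
      by auto
  qed
  with f z_ball \<open>f \<in> \<Lambda>\<close> show ?thesis
    by (auto simp: slice_def c_def)
qed

lemma has_small_slices_if_unit_norm:
  fixes \<Lambda> :: "('a::real_normed_vector \<Rightarrow>\<^sub>L real) set" and g :: "'a \<Rightarrow>\<^sub>L real"
  assumes \<Lambda>_ball: "\<Lambda> \<subseteq> cball 0 1"
    and compact: "compactin weak_star_topology \<Lambda>"
    and hull: "weak_star_closed_convex_hull \<Lambda> = cball 0 1"
    and smooth: "\<forall>f \<in> \<Lambda> \<inter> sphere 0 1. norm differentiable (at f)"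
    and "norm g = 1"
  shows "has_small_slices g"
proof (rule ccontr)
  assume "\<not> has_small_slices g"
  then obtain \<eta> where "\<eta> > 0" and big: "\<And>\<alpha>. \<alpha> > 0 \<Longrightarrow> \<exists>x\<in>slice g \<alpha>. \<exists>y\<in>slice g \<alpha>.
      \<exists>k. \<eta> * norm k < \<bar>blinfun_apply k x - blinfun_apply k y\<bar>"
    unfolding has_small_slices_def by (auto simp: not_le)
  define \<delta> :: "nat \<Rightarrow> real" where "\<delta> n = (1 / 2) ^ n * (1 / 2) ^ (n + 2)" for n
  have "\<forall>n. \<exists>x\<in>slice g (\<delta> n). \<exists>y\<in>slice g (\<delta> n).
      \<exists>k. \<eta> * norm k < \<bar>blinfun_apply k x - blinfun_apply k y\<bar>"
    using big by (simp add: \<delta>_def)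
  then obtain xs ys and ks :: "nat \<Rightarrow> 'a \<Rightarrow>\<^sub>L real"
    where xs: "\<And>n. xs n \<in> slice g (\<delta> n)" and ys: "\<And>n. ys n \<in> slice g (\<delta> n)"
      and far: "\<And>n. \<eta> * norm (ks n) < \<bar>ks n (xs n) - ks n (ys n)\<bar>"
    by metis
  define z where "z n = (1 / 2) *\<^sub>R (xs n + ys n)" for n
  have "z n \<in> slice g (\<delta> n)" for n
    using convexD[OF convex_slice xs ys, of "1 / 2" "1 / 2"] by (simp add: z_def scaleR_right_distrib)
  then obtain f where "f \<in> \<Lambda>" "norm f = 1" and f: "\<And>n. z n \<in> slice f ((1 / 2) ^ n)"
    using exists_unit_generator_in_slices[OF \<Lambda>_ball compact, of g z] hull \<open>norm g = 1\<close>
    by (auto simp: \<delta>_def)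
  with smooth have "has_small_slices f"
    by (simp add: has_small_slices_if_norm_differentiable)
  then obtain \<alpha> where "\<alpha> > 0" and \<alpha>: "\<forall>x\<in>slice f \<alpha>. \<forall>y\<in>slice f \<alpha>. \<forall>k.
      \<bar>blinfun_apply k x - blinfun_apply k y\<bar> \<le> \<eta> * norm k"
    using \<open>\<eta> > 0\<close> unfolding has_small_slices_def by blast
  obtain n :: nat where "(1 / 2) ^ n < \<alpha> / 2"
    using real_arch_pow_inv[of "\<alpha> / 2" "1 / 2"] \<open>\<alpha> > 0\<close> by auto
  have "norm (xs n) \<le> 1" "norm (ys n) \<le> 1"
    using xs ys by (simp_all add: slice_def)
  with f[of n] have "xs n \<in> slice f (2 * (1 / 2) ^ n)" "ys n \<in> slice f (2 * (1 / 2) ^ n)"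
    by (auto simp: z_def add.commute intro: slice_of_midpoint)
  then have "xs n \<in> slice f \<alpha>" "ys n \<in> slice f \<alpha>"
    using slice_mono[of "2 * (1 / 2) ^ n" \<alpha> f] \<open>(1 / 2) ^ n < \<alpha> / 2\<close> by auto
  with \<alpha> have "\<bar>ks n (xs n) - ks n (ys n)\<bar> \<le> \<eta> * norm (ks n)"
    by blast
  with far[of n] show False
    by simp
qed

theorem lemma3p1:
  fixes \<Lambda> :: "('a::banach \<Rightarrow>\<^sub>L real) set"
  assumes "\<Lambda> \<subseteq> cball 0 1"
    and "compactin weak_star_topology \<Lambda>"
    and "weak_star_closed_convex_hull \<Lambda> = cball 0 1"
    and "\<forall>f \<in> \<Lambda> \<inter> sphere 0 1. norm differentiable (at f)"
  shows "\<forall>f::'a \<Rightarrow>\<^sub>L real. f \<noteq> 0 \<longrightarrow> norm differentiable (at f)"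
proof (intro allI impI)
  fix f :: "'a \<Rightarrow>\<^sub>L real"
  assume "f \<noteq> 0"
  then have "has_small_slices (f /\<^sub>R norm f)"
    by (intro has_small_slices_if_unit_norm[OF assms]) simp
  then have "has_small_slices (norm f *\<^sub>R (f /\<^sub>R norm f))"
    by (rule has_small_slices_scaleR[rotated]) (use \<open>f \<noteq> 0\<close> in simp)
  with \<open>f \<noteq> 0\<close> show "norm differentiable (at f)"
    by (simp add: norm_differentiable_if_has_small_slices)
qed

end
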